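(* Let $A,B$ be commuting nilpotent $n\times n$ matrices with $\mathrm{sh}(B)=(\lambda_1,\lambda_2)$, $\lambda_1\ge\lambda_2\ge1$, and $\mathrm{sh}(A)=(\mu_1,\ldots,\mu_s)$. If $s>\lambda_1$, then $\mu_1\le\left\lceil\frac{\lambda_2}{s-\lambda_1}\right\rceil$.
   Context: $\mathbb{F}$ is an algebraically closed field of characteristic $0$ and matrices are over $\mathbb{F}$. For a nilpotent matrix $A$, $\mathrm{sh}(A)$ is the partition of $n$ given by the sizes of the Jordan blocks of its Jordan canonical form (so $s$ is the number of Jordan blocks of $A$ and $\mu_1$ its nilpotency index). *)

theory Defs
  imports Complex_Main "Jordan_Normal_Form.Jordan_Normal_Form_Uniqueness"
begin

definition nilpotent_mat :: "'a :: semiring_1 mat \<Rightarrow> bool" where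
  "nilpotent_mat A \<longleftrightarrow> (\<exists>k. A ^\<^sub>m k = 0\<^sub>m (dim_row A) (dim_col A))"

definition sh :: "'a :: semiring_1 mat \<Rightarrow> nat list" where
  "sh A = rev (sort (map fst (SOME n_as. jordan_nf A n_as)))"

end

theory Submission
  imports Defs "Jordan_Normal_Form.Jordan_Normal_Form_Existence" "Jordan_Normal_Form.DL_Rank"
begin

(* Proof of Proposition 3.8.  Let A, B be commuting nilpotent n x n matrices, sh B = (l1, l2)
   and s = length (sh A) = dim ker A > l1.  Put r = n - s and d = s - l1, so r + d = l2.

   Over an algebraically closed field every square matrix is
       triangularizable and hence has a Jordan normal form; for a nilpotent matrix all blocks
       belong to the eigenvalue 0, so dim ker A^k = sum_i min k (mu_i).  In particular
       s = dim ker A, and A^m = 0 forces every block size mu_i to be at most m.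
   (2) Absorption.  If B is nilpotent and commutes with A, then B^(n - dim ker A) * A = 0:
       the kernels of B^j * A strictly increase until they exhaust the whole space.
       Hence every vector A v lies in ker B^r.
   (3) Two Jordan blocks.  For B with two Jordan blocks, both of size >= l2, and r + d = l2,
       every y in ker B^r is of the form B^d z with z in ker B^l2.
   Iterating (2)+(3) gives A^m v = B^(m d) z with B^l2 z = 0, so A^m = 0 once m d >= l2;
   with m = ceil (l2 / d), (1) yields mu_1 <= ceil (l2 / (s - l1)). *)

section \<open>Jordan normal forms of nilpotent matrices\<close>

lemma monic_poly_splits:
  fixes p :: "'a :: field poly"
  assumes alg_closed: "\<forall>p :: 'a poly. degree p \<ge> 1 \<longrightarrow> (\<exists>x. poly p x = 0)"
    and monic: "monic p"
  shows "\<exists>es. p = (\<Prod>e\<leftarrow>es. [:-e,1:])"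
  using monic
proof (induction "degree p" arbitrary: p)
  case 0
  then have "p = 1" using monic_degree_0[of p] by simp
  then show ?case by (intro exI[of _ "[]"]) simp
next
  case (Suc d)
  then obtain x where "poly p x = 0" using alg_closed by (metis le_add1 plus_1_eq_Suc)
  then have "[:-x,1:] dvd p" using dvd_iff_poly_eq_0[of "-x" p] by simp
  then obtain q where q: "p = [:-x,1:] * q" by (rule dvdE)
  have "q \<noteq> 0" using q Suc(3) by auto
  then have "degree p = Suc (degree q)" unfolding q by (subst degree_mult_eq) auto
  then have "d = degree q" using Suc(2) by simp
  moreover have "monic q" using Suc(3) unfolding q lead_coeff_mult by simp
  ultimately obtain es where "q = (\<Prod>e\<leftarrow>es. [:-e,1:])" using Suc(1) by blast
  then show ?case by (intro exI[of _ "x # es"]) (simp add: q)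
qed

lemma invertible_mat_with_first_col:
  fixes v :: "'a :: field vec"
  assumes v: "v \<in> carrier_vec n" and v0: "v \<noteq> 0\<^sub>v n"
  obtains W W' where "W \<in> carrier_mat n n" "W' \<in> carrier_mat n n"
    "W' * W = 1\<^sub>m n" "W * W' = 1\<^sub>m n" "col W 0 = v"
proof -
  interpret vec_space "TYPE('a)" n .
  define b where "b = basis_completion v"
  define W where "W = mat_of_cols n b"
  from basis_completion[OF v v0, folded b_def]
  have "distinct b" "\<not> lin_dep (set b)" and b: "set b \<subseteq> carrier_vec n"
    and hdb: "hd b = v" and len_b: "length b = n" by auto
  moreover have W: "W \<in> carrier_mat n n" unfolding W_def using len_b by auto
  moreover have "cols W = b" unfolding W_def using b by simp
  ultimately have "rank W = n" using lin_indpt_full_rank[OF W] by auto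
  then have "det W \<noteq> 0" using det_rank_iff[OF W] by auto
  from det_non_zero_imp_unit[OF W this]
  obtain W' where "W' \<in> carrier_mat n n" "W' * W = 1\<^sub>m n" "W * W' = 1\<^sub>m n"
    unfolding Units_def ring_mat_def by auto
  moreover have "n > 0" using v v0 by (intro gr0I) auto
  then have "col W 0 = v" unfolding W_def using len_b hdb b
    by (subst col_mat_of_cols) (auto simp: hd_conv_nth)
  ultimately show thesis using that W by blast
qed

text \<open>Changing coordinates to a basis starting with an eigenvector for e turns the first column
  into e times the first unit vector.\<close>

lemma eigenvalue_first_column:
  fixes A :: "'a :: field mat"
  assumes A: "A \<in> carrier_mat n n" and e: "eigenvalue A e"
  obtains W W' A' where "similar_mat_wit A A' W W'" "A' \<in> carrier_mat n n"
    "col A' 0 = e \<cdot>\<^sub>v unit_vec n 0" "n > 0"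
proof -
  define v where "v = find_eigenvector A e"
  have "eigenvector A v e" unfolding v_def by (rule find_eigenvector[OF A e])
  then have v: "v \<in> carrier_vec n" and v0: "v \<noteq> 0\<^sub>v n" and eigen: "A *\<^sub>v v = e \<cdot>\<^sub>v v"
    using A unfolding eigenvector_def by auto
  have n: "n > 0" using v v0 by (intro gr0I) auto
  obtain W W' where W: "W \<in> carrier_mat n n" and W': "W' \<in> carrier_mat n n"
    and W'W: "W' * W = 1\<^sub>m n" and WW': "W * W' = 1\<^sub>m n" and colW: "col W 0 = v"
    using invertible_mat_with_first_col[OF v v0] by blast
  define A' where "A' = W' * A * W"
  have A': "A' \<in> carrier_mat n n" using W W' A unfolding A'_def by auto
  have "similar_mat_wit A' A W' W"
    by (rule similar_mat_witI[of _ _ n]) (use W W' A A' W'W WW' in \<open>auto simp: A'_def\<close>)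
  then have wit: "similar_mat_wit A A' W W'" by (rule similar_mat_wit_sym)
  have AW: "A * W \<in> carrier_mat n n" using A W by simp
  have "col A' 0 = col (W' * (A * W)) 0" unfolding A'_def using assoc_mult_mat[OF W' A W] by simp
  also have "\<dots> = W' *\<^sub>v col (A * W) 0" by (rule col_mult2[OF W' AW]) (use n in simp)
  also have "col (A * W) 0 = A *\<^sub>v v"
    unfolding colW[symmetric] by (rule col_mult2[OF A W]) (use n in simp)
  finally have "col A' 0 = e \<cdot>\<^sub>v (W' *\<^sub>v v)" using eigen mult_mat_vec[OF W' v] by simp
  also have "W' *\<^sub>v v = unit_vec n 0"
    using col_mult2[OF W' W, of 0] colW W'W n by simp
  finally show thesis using that wit A' n by blast
qed

lemma eigenvalue_block_form:
  fixes A :: "'a :: field mat"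
  assumes A: "A \<in> carrier_mat n n" and e: "eigenvalue A e"
  obtains W W' A2 A3 where
    "similar_mat_wit A (four_block_mat (mat 1 1 (\<lambda>_. e)) A2 (0\<^sub>m (n - 1) 1) A3) W W'"
    "A2 \<in> carrier_mat 1 (n - 1)" "A3 \<in> carrier_mat (n - 1) (n - 1)" "n > 0"
proof -
  obtain W W' A' where wit: "similar_mat_wit A A' W W'" and A': "A' \<in> carrier_mat n n"
    and col0: "col A' 0 = e \<cdot>\<^sub>v unit_vec n 0" and n: "n > 0"
    using eigenvalue_first_column[OF A e] by blast
  obtain A1 A2 A0 A3 where split: "split_block A' 1 1 = (A1, A2, A0, A3)"
    by (cases "split_block A' 1 1") auto
  have "dim_row A' = 1 + (n - 1)" "dim_col A' = 1 + (n - 1)" using A' n by auto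
  from split_block[OF split this] have A2: "A2 \<in> carrier_mat 1 (n - 1)"
    and A3: "A3 \<in> carrier_mat (n - 1) (n - 1)" and A'_block: "A' = four_block_mat A1 A2 A0 A3"
    by auto
  have "A' $$ (i, 0) = (if i = 0 then e else 0)" if "i < n" for i
    using arg_cong[OF col0, of "\<lambda>w. w $ i"] that A' n by auto
  then have "A1 = mat 1 1 (\<lambda>_. e)" "A0 = 0\<^sub>m (n - 1) 1"
    using split A' n unfolding split_block_def Let_def by auto
  then show thesis using that wit A2 A3 n unfolding A'_block by blast
qed

lemma triangularizable:
  fixes A :: "'a :: field mat"
  assumes "A \<in> carrier_mat n n" and "char_poly A = (\<Prod>e\<leftarrow>es. [:-e,1:])"
  shows "\<exists>C. C \<in> carrier_mat n n \<and> upper_triangular C \<and> similar_mat A C"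
  using assms
proof (induction es arbitrary: n A)
  case Nil
  then have "n = 0" using degree_monic_char_poly[of A n] by auto
  then show ?case using Nil by (auto intro!: exI[of _ A] similar_mat_refl)
next
  case (Cons e es n A)
  have "eigenvalue A e" unfolding eigenvalue_root_char_poly[OF Cons(2)] Cons(3) by simp
  then obtain W W' A2 A3 where
    wit: "similar_mat_wit A (four_block_mat (mat 1 1 (\<lambda>_. e)) A2 (0\<^sub>m (n - 1) 1) A3) W W'"
    (is "similar_mat_wit A ?M W W'")
    and A2: "A2 \<in> carrier_mat 1 (n - 1)" and A3: "A3 \<in> carrier_mat (n - 1) (n - 1)"
    and n: "n > 0"
    by (rule eigenvalue_block_form[OF Cons(2)])
  have E: "mat 1 1 (\<lambda>_. e) \<in> carrier_mat 1 1" by simp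
  have "char_poly (mat 1 1 (\<lambda>_. e)) = [:-e,1:]" by (simp add: char_poly_defs det_def sign_def)
  then have "[:-e,1:] * char_poly A3 = char_poly ?M"
    using char_poly_four_block_zeros_col[OF E A2 A3] by simp
  also have "\<dots> = char_poly A"
    using wit by (intro char_poly_similar[symmetric]) (auto simp: similar_mat_def)
  also have "\<dots> = [:-e,1:] * (\<Prod>e\<leftarrow>es. [:-e,1:])" using Cons(3) by simp
  finally have "char_poly A3 = (\<Prod>e\<leftarrow>es. [:-e,1:])"
    by (metis mult_cancel_left pCons_eq_0_iff zero_neq_one)
  from Cons(1)[OF A3 this] obtain T where T: "T \<in> carrier_mat (n - 1) (n - 1)"
    and ut: "upper_triangular T" and "similar_mat A3 T" by blast
  then obtain P Q where simT: "similar_mat_wit A3 T P Q" unfolding similar_mat_def by blast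
  note PQ = similar_mat_witD2[OF A3 simT]
  define C where "C = four_block_mat (mat 1 1 (\<lambda>_. e)) (A2 * P) (0\<^sub>m (n - 1) 1) T"
  have "similar_mat_wit ?M C (four_block_mat (1\<^sub>m 1) (0\<^sub>m 1 (n - 1)) (0\<^sub>m (n - 1) 1) P)
      (four_block_mat (1\<^sub>m 1) (0\<^sub>m 1 (n - 1)) (0\<^sub>m (n - 1) 1) Q)"
    unfolding C_def
    by (rule similar_mat_wit_four_block[OF similar_mat_wit_refl[OF E] simT])
      (use PQ A2 in auto)
  then have "similar_mat A C"
    using similar_mat_wit_trans[OF wit] unfolding similar_mat_def by blast
  moreover have "upper_triangular C"
    unfolding C_def by (intro upper_triangular_four_block[OF _ T _ ut]) auto
  moreover have "C \<in> carrier_mat n n"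
    unfolding C_def using A2 PQ T n by (auto simp del: four_block_carrier_mat)
  ultimately show ?case by blast
qed

lemma jordan_nf_exists_alg_closed:
  fixes A :: "'a :: field mat"
  assumes alg_closed: "\<forall>p :: 'a poly. degree p \<ge> 1 \<longrightarrow> (\<exists>x. poly p x = 0)"
    and A: "A \<in> carrier_mat n n"
  shows "jordan_nf A (SOME ns. jordan_nf A ns)"
proof -
  obtain es where "char_poly A = (\<Prod>e\<leftarrow>es. [:-e,1:])"
    using monic_poly_splits[OF alg_closed] degree_monic_char_poly[OF A] by blast
  from triangularizable[OF A this] obtain C where C: "C \<in> carrier_mat n n" "upper_triangular C"
    and "similar_mat A C" by blast
  then have "jordan_nf A (triangular_to_jnf_vector C)"
    using triangular_to_jnf_vector[OF C] similar_mat_trans unfolding jordan_nf_def by blast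
  then show ?thesis by (rule someI)
qed

text \<open>The zero matrix has full kernel dimension; it is the n-th power of the nilpotent
  Jordan block of size n, whose kernel dimensions are known.\<close>

lemma kernel_dim_zero_mat: "kernel_dim (0\<^sub>m n n :: 'a :: field mat) = n"
proof -
  have "jordan_block n (0 :: 'a) ^\<^sub>m n = 0\<^sub>m n n"
    unfolding jordan_block_zero_pow by (rule eq_matI) auto
  with dim_kernel_zero_jordan_block_pow[where 'a = 'a, of n n] show ?thesis
    unfolding kernel_dim_def by simp
qed

lemma sum_list_filter_min_ge:
  fixes ns :: "(nat \<times> 'b) list"
  assumes pos: "0 \<notin> set (map fst ns)"
    and ge: "sum_list (map fst ns) \<le> sum_list (map (min N) (map fst (filter P ns)))"
  shows "\<forall>x \<in> set ns. P x \<and> fst x \<le> N"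
  using assms
proof (induction ns)
  case (Cons x ns)
  have le: "sum_list (map (min N) (map fst (filter P ns))) \<le> sum_list (map fst ns)"
    by (induction ns) auto
  have x_pos: "fst x > 0" and ns_pos: "0 \<notin> set (map fst ns)" using Cons.prems(1) by auto
  show ?case
  proof (cases "P x")
    case True
    with Cons.prems(2) le have "fst x \<le> N"
      and "sum_list (map fst ns) \<le> sum_list (map (min N) (map fst (filter P ns)))"
      by simp_all
    with Cons.IH[OF ns_pos] True show ?thesis by simp
  next
    case False
    with Cons.prems(2) le x_pos show ?thesis by simp
  qed
qed simp

lemma nilpotent_jordan_nf:
  fixes A :: "'a :: field mat"
  assumes A: "A \<in> carrier_mat n n" and nil: "nilpotent_mat A" and jnf: "jordan_nf A ns"
  shows "sum_list (map fst ns) = n" "0 \<notin> set (map fst ns)" "\<forall>x \<in> set ns. snd x = 0"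
    "kernel_dim (A ^\<^sub>m k) = sum_list (map (min k) (map fst ns))"
proof -
  show pos: "0 \<notin> set (map fst ns)" using jnf unfolding jordan_nf_def by simp
  obtain m where "A \<in> carrier_mat m m" "jordan_matrix ns \<in> carrier_mat m m"
    using jnf similar_matD unfolding jordan_nf_def by blast
  then show sum: "sum_list (map fst ns) = n" using A unfolding carrier_mat_def by auto
  have dim_gen: "dim_gen_eigenspace A 0 k = kernel_dim (A ^\<^sub>m k)" for k
  proof -
    have "char_matrix A 0 = A" unfolding char_matrix_def using A by (intro eq_matI) auto
    then show ?thesis unfolding dim_gen_eigenspace_def by simp
  qed
  have blocks: "dim_gen_eigenspace A 0 k
      = sum_list (map (min k) (map fst (filter (\<lambda>(m, e). e = 0) ns)))" for k
    using dim_gen_eigenspace[OF jnf] by (simp add: case_prod_beta')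
  obtain N where "A ^\<^sub>m N = 0\<^sub>m n n" using nil A unfolding nilpotent_mat_def by auto
  then have "sum_list (map fst ns) \<le> sum_list (map (min N) (map fst (filter (\<lambda>(m, e). e = 0) ns)))"
    using blocks[of N] dim_gen[of N] kernel_dim_zero_mat[where 'a = 'a, of n] sum by simp
  from sum_list_filter_min_ge[OF pos this] show eigen0: "\<forall>x \<in> set ns. snd x = 0"
    by (auto simp: case_prod_beta)
  then have "filter (\<lambda>(m, e). e = 0) ns = ns"
    by (intro filter_True) (auto simp: case_prod_beta)
  then show "kernel_dim (A ^\<^sub>m k) = sum_list (map (min k) (map fst ns))"
    using blocks[of k] dim_gen[of k] by simp
qed

lemma length_sh_nilpotent:
  fixes A :: "'a :: field mat"
  assumes alg_closed: "\<forall>p :: 'a poly. degree p \<ge> 1 \<longrightarrow> (\<exists>x. poly p x = 0)"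
    and A: "A \<in> carrier_mat n n" and nil: "nilpotent_mat A"
  shows "length (sh A) = kernel_dim A"
proof -
  define ns where "ns = map fst (SOME ns. jordan_nf A ns)"
  note jnf = nilpotent_jordan_nf[OF A nil jordan_nf_exists_alg_closed[OF alg_closed A], folded ns_def]
  have "sum_list (map (min 1) ns) = length ns" using jnf(2) by (induction ns) auto
  moreover have "A ^\<^sub>m 1 = A" using A by simp
  ultimately show ?thesis using jnf(4)[of 1] unfolding sh_def ns_def by simp
qed

lemma sh_le_of_pow_zero:
  fixes A :: "'a :: field mat"
  assumes alg_closed: "\<forall>p :: 'a poly. degree p \<ge> 1 \<longrightarrow> (\<exists>x. poly p x = 0)"
    and A: "A \<in> carrier_mat n n" and nil: "nilpotent_mat A"
    and zero: "A ^\<^sub>m m = 0\<^sub>m n n" and x: "x \<in> set (sh A)"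
  shows "x \<le> m"
proof -
  define ns where "ns = (SOME ns. jordan_nf A ns)"
  note jnf = nilpotent_jordan_nf[OF A nil jordan_nf_exists_alg_closed[OF alg_closed A], folded ns_def]
  have "kernel_dim (A ^\<^sub>m m) = n" using zero kernel_dim_zero_mat[where 'a = 'a, of n] by simp
  then have "sum_list (map fst ns) \<le> sum_list (map (min m) (map fst (filter (\<lambda>_. True) ns)))"
    using jnf(1) jnf(4)[of m] by simp
  from sum_list_filter_min_ge[OF jnf(2) this] have "\<forall>y \<in> set ns. fst y \<le> m" by blast
  moreover have "x \<in> fst ` set ns" using x unfolding sh_def ns_def by simp
  ultimately show ?thesis by blast
qed

lemma sh_two_blocks:
  fixes B :: "'a :: field mat"
  assumes alg_closed: "\<forall>p :: 'a poly. degree p \<ge> 1 \<longrightarrow> (\<exists>x. poly p x = 0)"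
    and B: "B \<in> carrier_mat n n" and nil: "nilpotent_mat B" and shB: "sh B = [l1, l2]"
  obtains p q where "similar_mat B (jordan_matrix [(p, 0), (q, 0)])"
    "p + q = n" "n = l1 + l2" "min p q = l2"
proof -
  define ns where "ns = (SOME ns. jordan_nf B ns)"
  note jnf = jordan_nf_exists_alg_closed[OF alg_closed B, folded ns_def]
  note blocks = nilpotent_jordan_nf[OF B nil jnf]
  have sorted: "sort (map fst ns) = [l2, l1]"
    using shB rev_rev_ident[of "sort (map fst ns)"] unfolding sh_def ns_def by simp
  then have "length ns = 2"
    by (metis length_map length_sort list.size(3,4) numeral_2_eq_2 One_nat_def add.commute plus_1_eq_Suc)
  then obtain p e q f where ns: "ns = [(p, e), (q, f)]"
    by (auto simp: length_Suc_conv numeral_2_eq_2)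
  have "e = 0" "f = 0" using blocks(3) unfolding ns by auto
  then have "similar_mat B (jordan_matrix [(p, 0), (q, 0)])"
    using jnf unfolding ns jordan_nf_def by simp
  moreover have "p + q = n" using blocks(1) unfolding ns by simp
  moreover have "min p q = l2" "p + q = l1 + l2" using sorted unfolding ns by (auto split: if_splits)
  ultimately show thesis by (intro that) auto
qed

section \<open>Powers and kernels of square matrices\<close>

lemma pow_mat_add:
  assumes A: "A \<in> carrier_mat n n"
  shows "A ^\<^sub>m (i + j) = A ^\<^sub>m i * A ^\<^sub>m j"
proof (induction j)
  case 0
  then show ?case using A by simp
next
  case (Suc j)
  have "A ^\<^sub>m (i + Suc j) = A ^\<^sub>m i * A ^\<^sub>m j * A" using Suc by simp
  also have "\<dots> = A ^\<^sub>m i * (A ^\<^sub>m j * A)" using A by (intro assoc_mult_mat[of _ n n _ n _ n]) auto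
  finally show ?case by simp
qed

lemma pow_mat_commute:
  assumes A: "A \<in> carrier_mat n n" and B: "B \<in> carrier_mat n n" and comm: "A * B = B * A"
  shows "A * B ^\<^sub>m k = B ^\<^sub>m k * A"
proof (induction k)
  case 0
  then show ?case using A B by simp
next
  case (Suc k)
  have Bk: "B ^\<^sub>m k \<in> carrier_mat n n" using B by simp
  have "A * B ^\<^sub>m Suc k = (A * B ^\<^sub>m k) * B"
    using A B Bk by (simp add: assoc_mult_mat[of _ n n _ n _ n])
  also have "\<dots> = B ^\<^sub>m k * (A * B)" unfolding Suc
    using A B Bk by (simp add: assoc_mult_mat[of _ n n _ n _ n])
  also have "\<dots> = (B ^\<^sub>m k * B) * A" unfolding comm
    using A B Bk by (simp add: assoc_mult_mat[of _ n n _ n _ n])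
  finally show ?case by simp
qed

lemma mult_mat_zero_vec:
  "(M :: 'a :: field mat) \<in> carrier_mat k n \<Longrightarrow> M *\<^sub>v 0\<^sub>v n = 0\<^sub>v k"
  by (intro eq_vecI) (auto simp: mult_mat_vec_def scalar_prod_def)

lemma zero_mat_mult_vec:
  "(v :: 'a :: field vec) \<in> carrier_vec n \<Longrightarrow> 0\<^sub>m k n *\<^sub>v v = 0\<^sub>v k"
  by (intro eq_vecI) (auto simp: mult_mat_vec_def scalar_prod_def)

lemma mat_kernel_zero_mat: "mat_kernel (0\<^sub>m n n :: 'a :: field mat) = carrier_vec n"
  by (auto simp: mat_kernel_def)

text \<open>The kernel is a submodule of the coordinate space; this lets linear independence and
  spans be compared between different kernels.\<close>

lemma mat_kernel_submodule:
  fixes X :: "'a :: field mat"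
  assumes X: "X \<in> carrier_mat n n"
  shows "submodule class_ring (mat_kernel X) (module_vec TYPE('a) n)"
proof -
  interpret kernel n n X by unfold_locales (rule X)
  show ?thesis
    by unfold_locales
      (use X mult_add_distrib_mat_vec[OF X] mult_mat_vec[OF X] mat_kernel[OF X] in
        \<open>auto simp: class_ring_simps module_vec_simps\<close>)
qed

lemma kernel_dim_mono:
  fixes X Y :: "'a :: field mat"
  assumes X: "X \<in> carrier_mat n n" and Y: "Y \<in> carrier_mat n n"
    and sub: "mat_kernel X \<subseteq> mat_kernel Y"
  shows "kernel_dim X \<le> kernel_dim Y"
    and "kernel_dim X = kernel_dim Y \<Longrightarrow> mat_kernel X = mat_kernel Y"
proof -
  interpret KX: kernel n n X by unfold_locales (rule X)
  interpret KY: kernel n n Y by unfold_locales (rule Y)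
  obtain BX where fBX: "finite BX" and bX: "KX.basis BX" using kernel_basis_exists[OF X] by blast
  obtain BY where fBY: "finite BY" and bY: "KY.basis BY" using kernel_basis_exists[OF Y] by blast
  from bX have BXX: "BX \<subseteq> mat_kernel X" and liX: "\<not> KX.lin_dep BX"
    and spX: "KX.span BX = mat_kernel X" unfolding KX.Ker.basis_def by auto
  from bY have BYY: "BY \<subseteq> mat_kernel Y" and spY: "KY.span BY = mat_kernel Y"
    unfolding KY.Ker.basis_def by auto
  note subX = mat_kernel_submodule[OF X] and subY = mat_kernel_submodule[OF Y]
  have BXY: "BX \<subseteq> mat_kernel Y" using BXX sub by auto
  have liY: "\<not> KY.lin_dep BX"
    using liX KX.NC.span_li_not_depend(2)[OF BXX subX] KX.NC.span_li_not_depend(2)[OF BXY subY]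
    by simp
  have fd: "KY.Ker.fin_dim" unfolding KY.Ker.fin_dim_def using fBY BYY spY by auto
  have dX: "kernel_dim X = card BX" using KX.Ker.dim_basis[OF fBX bX] by simp
  show "kernel_dim X \<le> kernel_dim Y" using KY.Ker.li_le_dim(2)[OF fd BXY liY] dX by simp
  assume "kernel_dim X = kernel_dim Y"
  then have "KY.basis BX" using KY.Ker.dim_li_is_basis[OF fd fBX BXY liY] dX by simp
  then have "KY.span BX = mat_kernel Y" unfolding KY.Ker.basis_def by auto
  then show "mat_kernel X = mat_kernel Y"
    using spX KX.NC.span_li_not_depend(1)[OF BXX subX] KX.NC.span_li_not_depend(1)[OF BXY subY]
    by simp
qed

lemma mat_eq_zeroI:
  fixes X :: "'a :: field mat"
  assumes X: "X \<in> carrier_mat n m" and vanish: "\<And>v. v \<in> carrier_vec m \<Longrightarrow> X *\<^sub>v v = 0\<^sub>v n"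
  shows "X = 0\<^sub>m n m"
proof (rule eq_matI)
  fix i j assume "i < dim_row (0\<^sub>m n m :: 'a mat)" and "j < dim_col (0\<^sub>m n m :: 'a mat)"
  then have ij: "i < n" "j < m" by auto
  have "X $$ (i, j) = (X *\<^sub>v unit_vec m j) $ i" using X ij by simp
  then show "X $$ (i, j) = 0\<^sub>m n m $$ (i, j)" using vanish[of "unit_vec m j"] ij by simp
qed (use X in auto)

lemma kernel_dim_le_dim:
  fixes X :: "'a :: field mat"
  assumes X: "X \<in> carrier_mat n n"
  shows "kernel_dim X \<le> n"
  using kernel_dim_mono(1)[OF X zero_carrier_mat] mat_kernel_carrier[OF X]
  by (simp add: mat_kernel_zero_mat kernel_dim_zero_mat)

lemma kernel_dim_full_imp_zero:
  fixes X :: "'a :: field mat"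
  assumes X: "X \<in> carrier_mat n n" and full: "kernel_dim X = n"
  shows "X = 0\<^sub>m n n"
proof (rule mat_eq_zeroI[OF X])
  have "mat_kernel X = carrier_vec n"
    using kernel_dim_mono(2)[OF X zero_carrier_mat] mat_kernel_carrier[OF X] full
    by (simp add: mat_kernel_zero_mat kernel_dim_zero_mat)
  then show "X *\<^sub>v v = 0\<^sub>v n" if "v \<in> carrier_vec n" for v
    using mat_kernel[OF X] that by auto
qed

section \<open>A nilpotent matrix commuting with A absorbs A\<close>

text \<open>For commuting A and B the matrices B^j * A satisfy B^(j+1) * A = B * (B^j * A) =
  (B^j * A) * B.  The first identity makes their kernels increase with j; the second shows
  that once two consecutive kernels coincide, the chain of kernels is stationary.\<close>

lemma commuting_chain_step:
  assumes A: "A \<in> carrier_mat n n" and B: "B \<in> carrier_mat n n" and comm: "A * B = B * A"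
  shows "B ^\<^sub>m Suc j * A = B * (B ^\<^sub>m j * A)" "B ^\<^sub>m Suc j * A = (B ^\<^sub>m j * A) * B"
proof -
  have Bj: "B ^\<^sub>m j \<in> carrier_mat n n" using B by simp
  have "B ^\<^sub>m Suc j = B * B ^\<^sub>m j" using pow_mat_add[OF B, of 1 j] B by simp
  then show "B ^\<^sub>m Suc j * A = B * (B ^\<^sub>m j * A)" using assoc_mult_mat[OF B Bj A] by simp
  have "(B ^\<^sub>m j * A) * B = B ^\<^sub>m j * (B * A)" using assoc_mult_mat[OF Bj A B] comm by simp
  then show "B ^\<^sub>m Suc j * A = (B ^\<^sub>m j * A) * B" using assoc_mult_mat[OF Bj B A] by simp
qed

lemma commuting_kernel_chain_stable:
  fixes A B :: "'a :: field mat"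
  assumes A: "A \<in> carrier_mat n n" and B: "B \<in> carrier_mat n n" and comm: "A * B = B * A"
    and eq: "mat_kernel (B ^\<^sub>m Suc j * A) = mat_kernel (B ^\<^sub>m j * A)"
  shows "mat_kernel (B ^\<^sub>m (j + i) * A) = mat_kernel (B ^\<^sub>m j * A)"
proof -
  define C where "C k = B ^\<^sub>m k * A" for k
  have C: "C k \<in> carrier_mat n n" for k
    unfolding C_def by (rule mult_carrier_mat[OF pow_carrier_mat[OF B] A])
  note step = commuting_chain_step[OF A B comm, folded C_def]
  have ker: "x \<in> mat_kernel (C k) \<longleftrightarrow> x \<in> carrier_vec n \<and> C k *\<^sub>v x = 0\<^sub>v n" for x k
    using mat_kernel[OF C] by auto
  have shift: "C k *\<^sub>v (B *\<^sub>v x) = C (Suc k) *\<^sub>v x" if "x \<in> carrier_vec n" for x k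
    using assoc_mult_mat_vec[OF C B that] step(2) by simp
  have next_eq: "mat_kernel (C (Suc (Suc k))) = mat_kernel (C (Suc k))"
    if eq_k: "mat_kernel (C (Suc k)) = mat_kernel (C k)" for k
  proof
    show "mat_kernel (C (Suc k)) \<subseteq> mat_kernel (C (Suc (Suc k)))"
      unfolding step(1)[of "Suc k"] by (rule mat_kernel_mult_subset[OF C B])
    show "mat_kernel (C (Suc (Suc k))) \<subseteq> mat_kernel (C (Suc k))"
    proof
      fix x assume "x \<in> mat_kernel (C (Suc (Suc k)))"
      then have x: "x \<in> carrier_vec n" and "C (Suc k) *\<^sub>v (B *\<^sub>v x) = 0\<^sub>v n"
        using ker shift by auto
      then have "B *\<^sub>v x \<in> mat_kernel (C (Suc k))" using ker B by simp
      then have "B *\<^sub>v x \<in> mat_kernel (C k)" using eq_k by simp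
      then show "x \<in> mat_kernel (C (Suc k))" using ker shift x by simp
    qed
  qed
  have "mat_kernel (C (Suc (j + i))) = mat_kernel (C (j + i)) \<and> mat_kernel (C (j + i)) = mat_kernel (C j)"
    by (induction i) (use eq next_eq in \<open>auto simp: C_def\<close>)
  then show ?thesis unfolding C_def by simp
qed

lemma commuting_kernel_chain_grows:
  fixes A B :: "'a :: field mat"
  assumes A: "A \<in> carrier_mat n n" and B: "B \<in> carrier_mat n n" and comm: "A * B = B * A"
    and nil: "B ^\<^sub>m N = 0\<^sub>m n n" and less: "kernel_dim (B ^\<^sub>m j * A) < n"
  shows "kernel_dim (B ^\<^sub>m j * A) < kernel_dim (B ^\<^sub>m Suc j * A)"
proof -
  have C: "B ^\<^sub>m k * A \<in> carrier_mat n n" for k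
    by (rule mult_carrier_mat[OF pow_carrier_mat[OF B] A])
  have sub: "mat_kernel (B ^\<^sub>m j * A) \<subseteq> mat_kernel (B ^\<^sub>m Suc j * A)"
    unfolding commuting_chain_step(1)[OF A B comm] by (rule mat_kernel_mult_subset[OF C B])
  have "kernel_dim (B ^\<^sub>m j * A) \<noteq> kernel_dim (B ^\<^sub>m Suc j * A)"
  proof
    assume "kernel_dim (B ^\<^sub>m j * A) = kernel_dim (B ^\<^sub>m Suc j * A)"
    then have "mat_kernel (B ^\<^sub>m Suc j * A) = mat_kernel (B ^\<^sub>m j * A)"
      using kernel_dim_mono(2)[OF C C sub] by simp
    from commuting_kernel_chain_stable[OF A B comm this, of N]
    have "mat_kernel (B ^\<^sub>m j * A) = mat_kernel (B ^\<^sub>m (j + N) * A)" ..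
    also have "B ^\<^sub>m (j + N) * A = 0\<^sub>m n n" using A B nil by (simp add: pow_mat_add[OF B])
    finally have "kernel_dim (B ^\<^sub>m j * A) = kernel_dim (0\<^sub>m n n :: 'a mat)"
      unfolding kernel_dim_def using A by simp
    then show False using less kernel_dim_zero_mat[where 'a = 'a, of n] by simp
  qed
  then show ?thesis using kernel_dim_mono(1)[OF C C sub] by simp
qed

lemma nilpotent_commuting_absorbs:
  fixes A B :: "'a :: field mat"
  assumes A: "A \<in> carrier_mat n n" and B: "B \<in> carrier_mat n n" and comm: "A * B = B * A"
    and nil: "nilpotent_mat B"
  shows "B ^\<^sub>m (n - kernel_dim A) * A = 0\<^sub>m n n"
proof -
  obtain N where N: "B ^\<^sub>m N = 0\<^sub>m n n" using nil B unfolding nilpotent_mat_def by auto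
  have C: "B ^\<^sub>m k * A \<in> carrier_mat n n" for k
    by (rule mult_carrier_mat[OF pow_carrier_mat[OF B] A])
  have grow: "min n (kernel_dim A + j) \<le> kernel_dim (B ^\<^sub>m j * A)" for j
  proof (induction j)
    case 0
    then show ?case using A B by simp
  next
    case (Suc j)
    show ?case
    proof (cases "kernel_dim (B ^\<^sub>m j * A) < n")
      case True
      then show ?thesis using Suc commuting_kernel_chain_grows[OF A B comm N] by fastforce
    next
      case False
      have "mat_kernel (B ^\<^sub>m j * A) \<subseteq> mat_kernel (B ^\<^sub>m Suc j * A)"
        unfolding commuting_chain_step(1)[OF A B comm] by (rule mat_kernel_mult_subset[OF C B])
      then have "kernel_dim (B ^\<^sub>m j * A) \<le> kernel_dim (B ^\<^sub>m Suc j * A)"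
        by (rule kernel_dim_mono(1)[OF C C])
      with False show ?thesis by simp
    qed
  qed
  have "kernel_dim A \<le> n" by (rule kernel_dim_le_dim[OF A])
  then have "kernel_dim (B ^\<^sub>m (n - kernel_dim A) * A) = n"
    using grow[of "n - kernel_dim A"] kernel_dim_le_dim[OF C] by (simp add: le_antisym)
  then show ?thesis by (rule kernel_dim_full_imp_zero[OF C])
qed

section \<open>Matrices with two nilpotent Jordan blocks\<close>

lemma two_block_pow_mult_vec:
  assumes y: "y \<in> carrier_vec (a + b)" and i: "i < a + b"
  shows "((jordan_matrix [(a, 0), (b, 0)] :: 'a :: field mat) ^\<^sub>m k *\<^sub>v y) $ i =
    (if i + k < a + b \<and> (i < a \<longleftrightarrow> i + k < a) then y $ (i + k) else 0)"
proof -
  have "(jordan_matrix [(a, 0), (b, 0)] :: 'a mat) ^\<^sub>m k =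
      mat (a + b) (a + b) (\<lambda>(i, j). if j = i + k \<and> (i < a \<longleftrightarrow> j < a) then 1 else 0)"
    unfolding jordan_matrix_pow by (rule eq_matI) (auto simp: jordan_block_zero_pow)
  then have "((jordan_matrix [(a, 0), (b, 0)] :: 'a mat) ^\<^sub>m k *\<^sub>v y) $ i =
      (\<Sum>j\<in>{0..<a + b}. (if j = i + k \<and> (i < a \<longleftrightarrow> j < a) then 1 else 0) * y $ j)"
    using i y by (simp add: scalar_prod_def)
  also have "\<dots> = (\<Sum>j\<in>{0..<a + b}. if j = i + k then
      (if i < a \<longleftrightarrow> i + k < a then y $ (i + k) else 0) else 0)"
    by (rule sum.cong) auto
  finally show ?thesis by simp
qed

text \<open>For J = J_a(0) + J_b(0) with a, b >= l and r + d = l, every vector killed by J^r is the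
  image under J^d of a vector killed by J^l: shift it d places up inside each block.\<close>

lemma two_block_kernel_lift:
  fixes y :: "'a :: field vec" and a b l r d :: nat
  defines "J \<equiv> jordan_matrix [(a, 0), (b, 0)] :: 'a mat"
  assumes y: "y \<in> carrier_vec (a + b)" and al: "l \<le> a" and bl: "l \<le> b" and rd: "r + d = l"
    and yr: "J ^\<^sub>m r *\<^sub>v y = 0\<^sub>v (a + b)"
  shows "\<exists>z \<in> carrier_vec (a + b). J ^\<^sub>m l *\<^sub>v z = 0\<^sub>v (a + b) \<and> J ^\<^sub>m d *\<^sub>v z = y"
proof -
  have y0: "y $ j = 0" if j: "j < a + b" "(j < a \<and> r \<le> j) \<or> (a \<le> j \<and> r \<le> j - a)" for j
  proof -
    have jr: "j - r < a + b" using j by auto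
    have "(J ^\<^sub>m r *\<^sub>v y) $ (j - r) = 0" using j by (simp only: yr index_zero_vec jr)
    then have "(if j - r + r < a + b \<and> (j - r < a \<longleftrightarrow> j - r + r < a) then y $ (j - r + r) else 0) = 0"
      unfolding J_def two_block_pow_mult_vec[OF y jr] .
    then show ?thesis using j by (auto split: if_splits)
  qed
  define z where "z = vec (a + b) (\<lambda>i. if d \<le> (if i < a then i else i - a) then y $ (i - d) else 0)"
  have z: "z \<in> carrier_vec (a + b)" unfolding z_def by simp
  have "J ^\<^sub>m l *\<^sub>v z = 0\<^sub>v (a + b)"
  proof (rule eq_vecI)
    fix i assume "i < dim_vec (0\<^sub>v (a + b) :: 'a vec)"
    then have i: "i < a + b" by simp
    show "(J ^\<^sub>m l *\<^sub>v z) $ i = 0\<^sub>v (a + b) $ i"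
      unfolding J_def two_block_pow_mult_vec[OF z i] using i al bl rd
      by (auto simp: z_def intro!: y0)
  qed (use z in \<open>simp add: J_def\<close>)
  moreover have "J ^\<^sub>m d *\<^sub>v z = y"
  proof (rule eq_vecI)
    fix i assume "i < dim_vec y"
    then have i: "i < a + b" using y by simp
    show "(J ^\<^sub>m d *\<^sub>v z) $ i = y $ i"
      unfolding J_def two_block_pow_mult_vec[OF z i] using i al bl rd
      by (auto simp: z_def intro!: y0[symmetric]) (rule y0, linarith+)+
  qed (use z y in \<open>simp add: J_def\<close>)
  ultimately show ?thesis using z by blast
qed

lemma similar_mat_wit_pow_mult_vec:
  fixes B J :: "'a :: field mat"
  assumes B: "B \<in> carrier_mat n n" and wit: "similar_mat_wit B J P Q"
    and v: "v \<in> carrier_vec n"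
  shows "B ^\<^sub>m k *\<^sub>v (P *\<^sub>v v) = P *\<^sub>v (J ^\<^sub>m k *\<^sub>v v)"
    and "Q *\<^sub>v (B ^\<^sub>m k *\<^sub>v v) = J ^\<^sub>m k *\<^sub>v (Q *\<^sub>v v)"
proof -
  note D = similar_mat_witD2[OF B wit]
  have P: "P \<in> carrier_mat n n" and Q: "Q \<in> carrier_mat n n" and Jk: "J ^\<^sub>m k \<in> carrier_mat n n"
    and Bk': "B ^\<^sub>m k \<in> carrier_mat n n" using D B by auto
  have Bk: "B ^\<^sub>m k = P * J ^\<^sub>m k * Q" by (rule similar_mat_wit_pow_id[OF wit])
  have PJ: "P * J ^\<^sub>m k \<in> carrier_mat n n" using P Jk by simp
  have "B ^\<^sub>m k * P = P * J ^\<^sub>m k * (Q * P)" unfolding Bk by (rule assoc_mult_mat[OF PJ Q P])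
  then have "B ^\<^sub>m k * P = P * J ^\<^sub>m k" using D PJ by simp
  then show "B ^\<^sub>m k *\<^sub>v (P *\<^sub>v v) = P *\<^sub>v (J ^\<^sub>m k *\<^sub>v v)"
    using assoc_mult_mat_vec[OF Bk' P v] assoc_mult_mat_vec[OF P Jk v] by simp
  have "Q * B ^\<^sub>m k = (Q * P) * J ^\<^sub>m k * Q"
    unfolding Bk using assoc_mult_mat[OF Q P Jk] assoc_mult_mat[OF Q PJ Q] by simp
  then have "Q * B ^\<^sub>m k = J ^\<^sub>m k * Q" using D Jk by simp
  then show "Q *\<^sub>v (B ^\<^sub>m k *\<^sub>v v) = J ^\<^sub>m k *\<^sub>v (Q *\<^sub>v v)"
    using assoc_mult_mat_vec[OF Q Bk' v] assoc_mult_mat_vec[OF Jk Q v] by simp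
qed

lemma two_block_similar_kernel_lift:
  fixes B :: "'a :: field mat"
  assumes B: "B \<in> carrier_mat n n" and sim: "similar_mat B (jordan_matrix [(a, 0), (b, 0)])"
    and n: "a + b = n" and al: "l \<le> a" and bl: "l \<le> b" and rd: "r + d = l"
    and y: "y \<in> carrier_vec n" and yr: "B ^\<^sub>m r *\<^sub>v y = 0\<^sub>v n"
  shows "\<exists>z \<in> carrier_vec n. B ^\<^sub>m l *\<^sub>v z = 0\<^sub>v n \<and> B ^\<^sub>m d *\<^sub>v z = y"
proof -
  define J where "J = (jordan_matrix [(a, 0), (b, 0)] :: 'a mat)"
  obtain P Q where wit: "similar_mat_wit B J P Q" using sim unfolding similar_mat_def J_def by blast
  note D = similar_mat_witD2[OF B wit]
  have P: "P \<in> carrier_mat n n" and Q: "Q \<in> carrier_mat n n" and PQ: "P * Q = 1\<^sub>m n"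
    using D by auto
  have Qy: "Q *\<^sub>v y \<in> carrier_vec n" using Q y by simp
  have "J ^\<^sub>m r *\<^sub>v (Q *\<^sub>v y) = 0\<^sub>v n"
    using similar_mat_wit_pow_mult_vec(2)[OF B wit y, where k = r] yr mult_mat_zero_vec[OF Q] by simp
  then obtain z where z: "z \<in> carrier_vec n" and zl: "J ^\<^sub>m l *\<^sub>v z = 0\<^sub>v n"
    and zd: "J ^\<^sub>m d *\<^sub>v z = Q *\<^sub>v y"
    using two_block_kernel_lift[OF Qy[folded n] al bl rd] unfolding n J_def by blast
  have "B ^\<^sub>m l *\<^sub>v (P *\<^sub>v z) = 0\<^sub>v n"
    using similar_mat_wit_pow_mult_vec(1)[OF B wit z, where k = l] zl mult_mat_zero_vec[OF P] by simp
  moreover have "B ^\<^sub>m d *\<^sub>v (P *\<^sub>v z) = y"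
    using similar_mat_wit_pow_mult_vec(1)[OF B wit z, where k = d] zd assoc_mult_mat_vec[OF P Q y] PQ y by simp
  ultimately show ?thesis using P z by auto
qed

section \<open>Bounding the nilpotency index of A\<close>

lemma commuting_power_lift:
  fixes A B :: "'a :: field mat"
  assumes A: "A \<in> carrier_mat n n" and B: "B \<in> carrier_mat n n" and comm: "A * B = B * A"
    and lift: "\<And>v. v \<in> carrier_vec n \<Longrightarrow>
      \<exists>z \<in> carrier_vec n. B ^\<^sub>m l *\<^sub>v z = 0\<^sub>v n \<and> A *\<^sub>v v = B ^\<^sub>m d *\<^sub>v z"
    and v: "v \<in> carrier_vec n"
  shows "\<exists>z \<in> carrier_vec n. B ^\<^sub>m l *\<^sub>v z = 0\<^sub>v n \<and> A ^\<^sub>m Suc j *\<^sub>v v = B ^\<^sub>m (Suc j * d) *\<^sub>v z"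
  using v
proof (induction j arbitrary: v)
  case 0
  then show ?case using lift[OF 0] A by simp
next
  case (Suc j v)
  have Aj: "A ^\<^sub>m Suc j \<in> carrier_mat n n" and Bd: "B ^\<^sub>m d \<in> carrier_mat n n"
    and Bjd: "B ^\<^sub>m (Suc j * d) \<in> carrier_mat n n" using A B by auto
  obtain z1 where z1: "z1 \<in> carrier_vec n" and Av: "A *\<^sub>v v = B ^\<^sub>m d *\<^sub>v z1"
    using lift[OF Suc.prems] by blast
  obtain z where z: "z \<in> carrier_vec n" and zl: "B ^\<^sub>m l *\<^sub>v z = 0\<^sub>v n"
    and Az1: "A ^\<^sub>m Suc j *\<^sub>v z1 = B ^\<^sub>m (Suc j * d) *\<^sub>v z" using Suc.IH[OF z1] by blast
  have comm_pow: "A ^\<^sub>m Suc j * B ^\<^sub>m d = B ^\<^sub>m d * A ^\<^sub>m Suc j"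
    using pow_mat_commute[OF Aj B pow_mat_commute[OF B A comm[symmetric], symmetric]] .
  have "A ^\<^sub>m Suc (Suc j) *\<^sub>v v = A ^\<^sub>m Suc j *\<^sub>v (A *\<^sub>v v)"
    using assoc_mult_mat_vec[OF Aj A Suc.prems] by simp
  also have "\<dots> = B ^\<^sub>m d *\<^sub>v (A ^\<^sub>m Suc j *\<^sub>v z1)"
    unfolding Av using assoc_mult_mat_vec[OF Aj Bd z1] assoc_mult_mat_vec[OF Bd Aj z1] comm_pow
    by simp
  also have "\<dots> = B ^\<^sub>m (d + Suc j * d) *\<^sub>v z"
    unfolding Az1 pow_mat_add[OF B] using assoc_mult_mat_vec[OF Bd Bjd z] by simp
  finally show ?case using z zl by (auto simp: add.commute)
qed

lemma commuting_lift_pow_zero: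
  fixes A B :: "'a :: field mat"
  assumes A: "A \<in> carrier_mat n n" and B: "B \<in> carrier_mat n n" and comm: "A * B = B * A"
    and lift: "\<And>v. v \<in> carrier_vec n \<Longrightarrow>
      \<exists>z \<in> carrier_vec n. B ^\<^sub>m l *\<^sub>v z = 0\<^sub>v n \<and> A *\<^sub>v v = B ^\<^sub>m d *\<^sub>v z"
    and m: "0 < m" and md: "l \<le> m * d"
  shows "A ^\<^sub>m m = 0\<^sub>m n n"
proof (rule mat_eq_zeroI)
  obtain j where mj: "m = Suc j" using m gr0_implies_Suc by blast
  show "A ^\<^sub>m m *\<^sub>v v = 0\<^sub>v n" if v: "v \<in> carrier_vec n" for v
  proof -
    obtain z where z: "z \<in> carrier_vec n" and zl: "B ^\<^sub>m l *\<^sub>v z = 0\<^sub>v n"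
      and Av: "A ^\<^sub>m m *\<^sub>v v = B ^\<^sub>m (m * d) *\<^sub>v z"
      using commuting_power_lift[OF A B comm lift v, of j] mj by blast
    have "B ^\<^sub>m (m * d) = B ^\<^sub>m (m * d - l) * B ^\<^sub>m l"
      using pow_mat_add[OF B, of "m * d - l" l] md by simp
    then show ?thesis
      using Av zl assoc_mult_mat_vec[of "B ^\<^sub>m (m * d - l)" n n "B ^\<^sub>m l" n z] z B
        mult_mat_zero_vec[of "B ^\<^sub>m (m * d - l)" n n] by simp
  qed
  show "A ^\<^sub>m m \<in> carrier_mat n n" using A by simp
qed

lemma commuting_two_block_lift:
  fixes A B :: "'a :: field mat"
  assumes A: "A \<in> carrier_mat n n" and B: "B \<in> carrier_mat n n" and comm: "A * B = B * A"
    and nil: "nilpotent_mat B" and sim: "similar_mat B (jordan_matrix [(p, 0), (q, 0)])"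
    and pq: "p + q = n" and l: "l \<le> min p q" and rd: "(n - kernel_dim A) + d = l"
    and v: "v \<in> carrier_vec n"
  shows "\<exists>z \<in> carrier_vec n. B ^\<^sub>m l *\<^sub>v z = 0\<^sub>v n \<and> A *\<^sub>v v = B ^\<^sub>m d *\<^sub>v z"
proof -
  have "B ^\<^sub>m (n - kernel_dim A) *\<^sub>v (A *\<^sub>v v) = (B ^\<^sub>m (n - kernel_dim A) * A) *\<^sub>v v"
    using assoc_mult_mat_vec[OF pow_carrier_mat[OF B] A v] by simp
  also have "\<dots> = 0\<^sub>v n"
    unfolding nilpotent_commuting_absorbs[OF A B comm nil] by (rule zero_mat_mult_vec[OF v])
  finally have "B ^\<^sub>m (n - kernel_dim A) *\<^sub>v (A *\<^sub>v v) = 0\<^sub>v n" .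
  moreover have "l \<le> p" "l \<le> q" using l by auto
  moreover have "A *\<^sub>v v \<in> carrier_vec n" using A v by simp
  ultimately show ?thesis using two_block_similar_kernel_lift[OF B sim pq _ _ rd] by metis
qed

lemma le_nat_ceiling_div_mult:
  assumes "0 < d"
  shows "l \<le> nat \<lceil>real l / real d\<rceil> * d"
proof -
  have "real l \<le> of_int \<lceil>real l / real d\<rceil> * real d"
    using le_of_int_ceiling[of "real l / real d"] assms by (metis of_nat_0_less_iff pos_divide_le_eq)
  then have "int l \<le> \<lceil>real l / real d\<rceil> * int d"
    by (metis of_int_le_iff of_int_mult of_int_of_nat_eq)
  moreover have "0 \<le> \<lceil>real l / real d\<rceil>"
    using divide_nonneg_nonneg[of "real l" "real d"] unfolding zero_le_ceiling by linarith
  ultimately show ?thesis by (metis nat_int nat_mono nat_mult_distrib)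
qed

theorem proposition3p8:
  fixes A B :: "'a :: field_char_0 mat" and n l1 l2 :: nat
  assumes alg_closed: "\<forall>p :: 'a poly. degree p \<ge> 1 \<longrightarrow> (\<exists>x. poly p x = 0)"
    and A: "A \<in> carrier_mat n n" and B: "B \<in> carrier_mat n n"
    and comm: "A * B = B * A"
    and nilA: "nilpotent_mat A" and nilB: "nilpotent_mat B"
    and shB: "sh B = [l1, l2]" and l12: "l1 \<ge> l2" and l2: "l2 \<ge> 1"
    and s: "length (sh A) > l1"
  shows "int (sh A ! 0) \<le> \<lceil>real l2 / real (length (sh A) - l1)\<rceil>"
proof -
  define d where "d = length (sh A) - l1"
  define m where "m = nat \<lceil>real l2 / real d\<rceil>"
  have s_ker: "length (sh A) = kernel_dim A" by (rule length_sh_nilpotent[OF alg_closed A nilA])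
  obtain p q where simB: "similar_mat B (jordan_matrix [(p, 0), (q, 0)])"
    and pq: "p + q = n" and n: "n = l1 + l2" and min_pq: "min p q = l2"
    using sh_two_blocks[OF alg_closed B nilB shB] by blast
  have rd: "(n - kernel_dim A) + d = l2"
    using kernel_dim_le_dim[OF A] s n unfolding d_def s_ker by linarith
  have lift: "\<exists>z \<in> carrier_vec n. B ^\<^sub>m l2 *\<^sub>v z = 0\<^sub>v n \<and> A *\<^sub>v v = B ^\<^sub>m d *\<^sub>v z"
    if "v \<in> carrier_vec n" for v
    using commuting_two_block_lift[OF A B comm nilB simB pq _ rd that] min_pq by simp
  have "0 < d" using s unfolding d_def by simp
  then have md: "l2 \<le> m * d" unfolding m_def by (rule le_nat_ceiling_div_mult)
  with l2 have "0 < m" by (cases m) auto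
  with md have "A ^\<^sub>m m = 0\<^sub>m n n" by (intro commuting_lift_pow_zero[OF A B comm lift])
  moreover have "sh A ! 0 \<in> set (sh A)" using s by (intro nth_mem) linarith
  ultimately have "sh A ! 0 \<le> m" by (rule sh_le_of_pow_zero[OF alg_closed A nilA])
  then show ?thesis using \<open>0 < m\<close> unfolding m_def d_def by (simp add: le_nat_iff)
qed

end
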